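(* Let $I_n$ denote the number of inversion sequences of length $n$ avoiding all of the patterns $100$, $102$, $201$, $210$ (with $I_0=1$). Then $$\sum_{n\ge0} I_n z^n=\frac{(1-4z)(1-2z)(3-2z)-(1-8z+12z^2-2z^3)\sqrt{1-4z}}{2(1-z)^2(1-4z)} = 1+z+2z^2+6z^3+21z^4+76z^5+\cdots.$$
   Context: An inversion sequence of length $n$ is an integer sequence $(a_1,\dots,a_n)$ with $0\le a_i<i$ for all $i$. A pattern is a sequence $\sigma$ of non-negative integers containing every value from $0$ to $\max(\sigma)$; the reduction of a sequence replaces its smallest values by $0$, the next smallest by $1$, etc. A sequence $a$ contains $\sigma$ if some (not necessarily consecutive) subsequence of $a$ has reduction $\sigma$; otherwise $a$ avoids $\sigma$. Equivalently, these are the inversion sequences with no $i<j<k$ such that $a_i>a_j$ and $a_i\ne a_k$. The square root is the power series with constant term $1$. *)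

theory Defs
  imports Complex_Main "HOL-Library.Sublist" "HOL-Computational_Algebra.Formal_Power_Series"
begin

text \<open>Inversion sequences of length n, as 0-indexed lists: entry at position i
  (the paper's a_{i+1}) satisfies 0 \<le> a < i+1.\<close>
definition inv_seq :: "nat \<Rightarrow> nat list \<Rightarrow> bool" where
  "inv_seq n a \<longleftrightarrow> length a = n \<and> (\<forall>i<n. a ! i \<le> i)"

definition reduction :: "nat list \<Rightarrow> nat list" where
  "reduction xs = map (\<lambda>x. card {y \<in> set xs. y < x}) xs"

definition contains_pat :: "nat list \<Rightarrow> nat list \<Rightarrow> bool" where
  "contains_pat a \<sigma> \<longleftrightarrow> (\<exists>ys. subseq ys a \<and> reduction ys = \<sigma>)"

definition avoids_pat :: "nat list \<Rightarrow> nat list \<Rightarrow> bool" where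
  "avoids_pat a \<sigma> \<longleftrightarrow> \<not> contains_pat a \<sigma>"

definition I_count :: "nat \<Rightarrow> nat" where
  "I_count n = card {a. inv_seq n a \<and> avoids_pat a [1,0,0] \<and> avoids_pat a [1,0,2]
                        \<and> avoids_pat a [2,0,1] \<and> avoids_pat a [2,1,0]}"

end

theory Submission
  imports Defs
begin

text \<open>
  An inversion sequence avoids 100, 102, 201 and 210 iff it has no positions i < j < k with
  a_j < a_i and a_k \<noteq> a_i. Avoiders are built by appending entries. A weakly increasing
  sequence of length n can be extended by any of the n + 1 admissible values. If an avoider has a
  descent, a further entry must equal every descent top and dominate every entry, so it can only
  be the maximum, and once appended the maximum can be appended again. Writing C_n for the number
  of weakly increasing inversion sequences (Catalan numbers, by splitting at the last fixed point),
  L_n for the number of unsorted avoiders that can be extended, and G_n for the number of pairs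
  (c, x) with c weakly increasing and c x unsorted and extendable, this gives
    I_(n+1) = (n + 1) C_n + L_n,   L_(n+1) = L_n + G_n,   G_(n+1) - G_n = C_(n+2) - 2 C_(n+1).
  In generating functions C = 1 + z C^2, so sqrt(1 - 4z) = 1 - 2 z C and (z C)' sqrt(1 - 4z) = 1,
  and the three recurrences become linear equations whose solution is the stated closed form.
\<close>

section \<open>Bad triples\<close>

lemma subseq_iff_indices:
  "subseq xs ys \<longleftrightarrow>
     (\<exists>is. sorted_wrt (<) is \<and> set is \<subseteq> {..<length ys} \<and> xs = map ((!) ys) is)"
proof
  assume "subseq xs ys"
  then obtain N where N: "xs = nths ys N"
    by (auto simp: subseq_conv_nths)
  define "is" where "is = nths [0..<length ys] N"
  have "sorted_wrt (<) is"
    by (simp add: is_def strict_sorted_iff sorted_nths)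
  moreover have "set is \<subseteq> {..<length ys}"
    using set_nths_subset[of "[0..<length ys]" N] by (auto simp: is_def)
  moreover have "xs = map ((!) ys) is"
    using N nths_map[of "(!) ys" "[0..<length ys]" N] by (simp add: is_def map_nth)
  ultimately show "\<exists>is. sorted_wrt (<) is \<and> set is \<subseteq> {..<length ys} \<and> xs = map ((!) ys) is"
    by blast
next
  assume "\<exists>is. sorted_wrt (<) is \<and> set is \<subseteq> {..<length ys} \<and> xs = map ((!) ys) is"
  then obtain "is" where "sorted_wrt (<) is" "set is \<subseteq> {..<length ys}" "xs = map ((!) ys) is"
    by blast
  then have "subseq is [0..<length ys]"
    by (intro sorted_subset_imp_subseq) auto
  then have "subseq (map ((!) ys) is) (map ((!) ys) [0..<length ys])"
    by (rule subseq_map)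
  then show "subseq xs ys"
    by (simp add: \<open>xs = _\<close> map_nth)
qed

lemma subseq3_iff_nth:
  "subseq [x, y, z] a \<longleftrightarrow>
     (\<exists>i j k. i < j \<and> j < k \<and> k < length a \<and> a ! i = x \<and> a ! j = y \<and> a ! k = z)"
  unfolding subseq_iff_indices
proof
  assume "\<exists>is. sorted_wrt (<) is \<and> set is \<subseteq> {..<length a} \<and> [x, y, z] = map ((!) a) is"
  then show "\<exists>i j k. i < j \<and> j < k \<and> k < length a \<and> a ! i = x \<and> a ! j = y \<and> a ! k = z"
    by (fastforce simp: Cons_eq_map_conv)
next
  assume "\<exists>i j k. i < j \<and> j < k \<and> k < length a \<and> a ! i = x \<and> a ! j = y \<and> a ! k = z"
  then obtain i j k where "i < j" "j < k" "k < length a" "a ! i = x" "a ! j = y" "a ! k = z"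
    by blast
  then show "\<exists>is. sorted_wrt (<) is \<and> set is \<subseteq> {..<length a} \<and> [x, y, z] = map ((!) a) is"
    by (intro exI[of _ "[i, j, k]"]) auto
qed

lemma reduction3_bad_iff:
  "reduction [x, y, z] \<in> {[1, 0, 0], [1, 0, 2], [2, 0, 1], [2, 1, 0]} \<longleftrightarrow> y < x \<and> x \<noteq> (z :: nat)"
proof -
  have smaller: "{w \<in> {x, y, z}. w < t} =
      (if x < t then {x} else {}) \<union> (if y < t then {y} else {}) \<union> (if z < t then {z} else {})" for t
    by auto
  show ?thesis
    unfolding reduction_def list.map set_simps smaller
    by (cases x y rule: linorder_cases; cases x z rule: linorder_cases; cases y z rule: linorder_cases)
      (auto simp: card_insert_if)
qed

definition has_bad_triple :: "nat list \<Rightarrow> bool" where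
  "has_bad_triple a \<longleftrightarrow>
     (\<exists>i j k. i < j \<and> j < k \<and> k < length a \<and> a ! j < a ! i \<and> a ! k \<noteq> a ! i)"

lemma avoids_bad_patterns_iff:
  "avoids_pat a [1, 0, 0] \<and> avoids_pat a [1, 0, 2] \<and> avoids_pat a [2, 0, 1] \<and> avoids_pat a [2, 1, 0]
     \<longleftrightarrow> \<not> has_bad_triple a"
proof -
  let ?P = "{[1, 0, 0], [1, 0, 2], [2, 0, 1], [2, 1, 0]} :: nat list set"
  have "(\<exists>ys. subseq ys a \<and> reduction ys \<in> ?P) \<longleftrightarrow> (\<exists>x y z. subseq [x, y, z] a \<and> y < x \<and> x \<noteq> z)"
  proof
    assume "\<exists>ys. subseq ys a \<and> reduction ys \<in> ?P"
    then obtain ys where ys: "subseq ys a" "reduction ys \<in> ?P"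
      by blast
    have "length ys = length (reduction ys)"
      by (simp add: reduction_def)
    also have "\<dots> = 3"
      using ys(2) by auto
    finally obtain x y z where "ys = [x, y, z]"
      by (auto simp: numeral_eq_Suc length_Suc_conv)
    with ys show "\<exists>x y z. subseq [x, y, z] a \<and> y < x \<and> x \<noteq> z"
      using reduction3_bad_iff by blast
  next
    assume "\<exists>x y z. subseq [x, y, z] a \<and> y < x \<and> x \<noteq> z"
    then obtain x y z where "subseq [x, y, z] a" "y < x" "x \<noteq> z"
      by blast
    then show "\<exists>ys. subseq ys a \<and> reduction ys \<in> ?P"
      using reduction3_bad_iff[of x y z] by blast
  qed
  also have "\<dots> \<longleftrightarrow> has_bad_triple a"
    unfolding has_bad_triple_def subseq3_iff_nth by fastforce
  finally have "(\<exists>ys. subseq ys a \<and> reduction ys \<in> ?P) \<longleftrightarrow> has_bad_triple a" .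
  moreover have "(\<exists>ys. subseq ys a \<and> reduction ys \<in> ?P) \<longleftrightarrow>
      contains_pat a [1, 0, 0] \<or> contains_pat a [1, 0, 2] \<or> contains_pat a [2, 0, 1] \<or> contains_pat a [2, 1, 0]"
    unfolding contains_pat_def insert_iff empty_iff by blast
  ultimately show ?thesis
    unfolding avoids_pat_def by blast
qed

section \<open>Descents and one-step extensions\<close>

definition descent_tops :: "nat list \<Rightarrow> nat set" where
  "descent_tops a = {a ! i | i. \<exists>j. i < j \<and> j < length a \<and> a ! j < a ! i}"

lemma descent_topsI: "i < j \<Longrightarrow> j < length a \<Longrightarrow> a ! j < a ! i \<Longrightarrow> a ! i \<in> descent_tops a"
  by (auto simp: descent_tops_def)

lemma descent_tops_subset_set: "descent_tops a \<subseteq> set a"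
  by (auto simp: descent_tops_def)

lemma sorted_iff_descent_tops_empty: "sorted a \<longleftrightarrow> descent_tops a = {}"
proof -
  have "sorted a \<longleftrightarrow> \<not> (\<exists>i j. i < j \<and> j < length a \<and> a ! j < a ! i)"
    unfolding sorted_iff_nth_mono_less by (meson not_le)
  then show ?thesis
    by (auto simp: descent_tops_def)
qed

lemma descent_tops_snoc: "descent_tops (c @ [x]) = descent_tops c \<union> {e \<in> set c. x < e}"
proof (intro set_eqI iffI)
  fix v assume "v \<in> descent_tops (c @ [x])"
  then obtain i j where ij: "i < j" "j \<le> length c" "(c @ [x]) ! j < (c @ [x]) ! i" "v = (c @ [x]) ! i"
    by (auto simp: descent_tops_def)
  show "v \<in> descent_tops c \<union> {e \<in> set c. x < e}"
  proof (cases "j = length c")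
    case True
    with ij show ?thesis by (auto simp: nth_append)
  next
    case False
    with ij have "v = c ! i" "i < j" "j < length c" "c ! j < c ! i"
      by (auto simp: nth_append)
    then show ?thesis
      using descent_topsI by blast
  qed
next
  fix v assume "v \<in> descent_tops c \<union> {e \<in> set c. x < e}"
  then show "v \<in> descent_tops (c @ [x])"
  proof
    assume "v \<in> descent_tops c"
    then obtain i j where "i < j" "j < length c" "c ! j < c ! i" "v = c ! i"
      by (auto simp: descent_tops_def)
    then show ?thesis
      using descent_topsI[of i j "c @ [x]"] by (simp add: nth_append)
  next
    assume "v \<in> {e \<in> set c. x < e}"
    then obtain i where "i < length c" "c ! i = v" "x < v"
      by (auto simp: in_set_conv_nth)
    then show ?thesis
      using descent_topsI[of i "length c" "c @ [x]"] by (simp add: nth_append)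
  qed
qed

lemma has_bad_triple_snoc:
  "has_bad_triple (c @ [x]) \<longleftrightarrow> has_bad_triple c \<or> \<not> descent_tops c \<subseteq> {x}"
proof
  assume "has_bad_triple (c @ [x])"
  then obtain i j k where ijk: "i < j" "j < k" "k < Suc (length c)"
    "(c @ [x]) ! j < (c @ [x]) ! i" "(c @ [x]) ! k \<noteq> (c @ [x]) ! i"
    unfolding has_bad_triple_def by auto
  show "has_bad_triple c \<or> \<not> descent_tops c \<subseteq> {x}"
  proof (cases "k = length c")
    case True
    with ijk have "c ! j < c ! i" "x \<noteq> c ! i"
      by (simp_all add: nth_append)
    with ijk True have "c ! i \<in> descent_tops c - {x}"
      using descent_topsI[of i j c] by simp
    then show ?thesis
      by blast
  next
    case False
    with ijk have "i < j \<and> j < k \<and> k < length c \<and> c ! j < c ! i \<and> c ! k \<noteq> c ! i"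
      by (simp add: nth_append)
    then show ?thesis
      unfolding has_bad_triple_def by blast
  qed
next
  assume "has_bad_triple c \<or> \<not> descent_tops c \<subseteq> {x}"
  then show "has_bad_triple (c @ [x])"
  proof
    assume "has_bad_triple c"
    then obtain i j k where "i < j" "j < k" "k < length c" "c ! j < c ! i" "c ! k \<noteq> c ! i"
      by (auto simp: has_bad_triple_def)
    then show ?thesis
      unfolding has_bad_triple_def
      by (intro exI[of _ i] exI[of _ j] exI[of _ k]) (simp add: nth_append)
  next
    assume "\<not> descent_tops c \<subseteq> {x}"
    then obtain i j where "i < j" "j < length c" "c ! j < c ! i" "c ! i \<noteq> x"
      by (auto simp: descent_tops_def)
    then show ?thesis
      unfolding has_bad_triple_def
      by (intro exI[of _ i] exI[of _ j] exI[of _ "length c"]) (auto simp: nth_append)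
  qed
qed

lemma set_le_avoiding_snoc:
  assumes nb: "\<not> has_bad_triple (c @ [x])" and "v \<in> descent_tops c" and "e \<in> set c"
  shows "e \<le> x"
proof (rule ccontr)
  assume "\<not> e \<le> x"
  obtain i j where ij: "i < j" "j < length c" "c ! j < c ! i" "v = c ! i"
    using \<open>v \<in> descent_tops c\<close> by (auto simp: descent_tops_def)
  obtain k where k: "k < length c" "c ! k = e"
    using \<open>e \<in> set c\<close> by (auto simp: in_set_conv_nth)
  have tops: "descent_tops c \<subseteq> {x}" and "\<not> has_bad_triple c"
    using nb by (auto simp: has_bad_triple_snoc)
  with ij have "c ! i = x"
    using \<open>v \<in> descent_tops c\<close> by blast
  consider "k < j" | "k = j" | "j < k"
    by linarith
  then show False
  proof cases
    case 1
    with ij k \<open>c ! i = x\<close> \<open>\<not> e \<le> x\<close> have "e \<in> descent_tops c"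
      using descent_topsI[of k j c] by simp
    with tops \<open>\<not> e \<le> x\<close> show False
      by auto
  next
    case 2
    with ij k \<open>c ! i = x\<close> \<open>\<not> e \<le> x\<close> show False
      by simp
  next
    case 3
    with ij k \<open>c ! i = x\<close> \<open>\<not> e \<le> x\<close> have "has_bad_triple c"
      unfolding has_bad_triple_def by (intro exI[of _ i] exI[of _ j] exI[of _ k]) auto
    with \<open>\<not> has_bad_triple c\<close> show False
      by blast
  qed
qed

definition max0 :: "nat list \<Rightarrow> nat" where
  "max0 a = Max (set (0 # a))"

lemma max0_le_iff: "max0 a \<le> x \<longleftrightarrow> (\<forall>e \<in> set a. e \<le> x)"
  by (simp add: max0_def)

lemma le_max0: "e \<in> set a \<Longrightarrow> e \<le> max0 a"
  using max0_le_iff by blast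

lemma max0_snoc: "max0 (c @ [x]) = max (max0 c) x"
proof -
  have "set (0 # c @ [x]) = insert x (set (0 # c))"
    by auto
  then show ?thesis
    by (simp only: max0_def Max_insert[of "set (0 # c)" x] List.finite_set) (simp add: max.commute)
qed

lemma max0_snoc_ge: "max0 c \<le> z \<Longrightarrow> max0 (c @ [z]) = z"
  by (simp add: max0_snoc)

lemma max0_in_set:
  assumes "a \<noteq> []"
  shows "max0 a \<in> set a"
proof -
  have "max0 a = Max (set a)"
    using assms by (simp add: max0_def)
  then show ?thesis
    using assms by simp
qed

lemma sorted_snoc_iff: "sorted (c @ [x]) \<longleftrightarrow> sorted c \<and> max0 c \<le> x"
  by (auto simp: sorted_append max0_le_iff)

lemma snoc_avoiding_eq_max0:
  assumes "\<not> has_bad_triple (c @ [x])" and "\<not> sorted c"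
  shows "x = max0 c"
proof -
  obtain v where v: "v \<in> descent_tops c"
    using \<open>\<not> sorted c\<close> sorted_iff_descent_tops_empty by blast
  with assms(1) have "v = x"
    using has_bad_triple_snoc by blast
  with v have "x \<in> set c"
    using descent_tops_subset_set by blast
  moreover have "\<forall>e \<in> set c. e \<le> x"
    using set_le_avoiding_snoc[OF assms(1) v] by blast
  ultimately show ?thesis
    by (intro antisym) (auto simp: max0_le_iff max0_def)
qed

lemma descent_tops_snoc_avoiding:
  assumes "\<not> has_bad_triple (c @ [x])" and "\<not> sorted c"
  shows "descent_tops (c @ [x]) = descent_tops c"
proof -
  obtain v where "v \<in> descent_tops c"
    using \<open>\<not> sorted c\<close> sorted_iff_descent_tops_empty by blast
  then have "{e \<in> set c. x < e} = {}"
    using set_le_avoiding_snoc[OF assms(1)] by force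
  then show ?thesis
    by (simp only: descent_tops_snoc Un_empty_right)
qed

section \<open>Counting avoiders by their last entry\<close>

definition avoiders :: "nat \<Rightarrow> nat list set" where
  "avoiders n = {a. inv_seq n a \<and> \<not> has_bad_triple a}"

definition sorted_inv_seqs :: "nat \<Rightarrow> nat list set" where
  "sorted_inv_seqs n = {a. inv_seq n a \<and> sorted a}"

definition extendable :: "nat \<Rightarrow> nat list set" where
  "extendable n = {a \<in> avoiders n. \<not> sorted a \<and> (\<exists>x. a @ [x] \<in> avoiders (Suc n))}"

definition descent_values :: "nat list \<Rightarrow> nat set" where
  "descent_values c = {x. x < max0 c \<and> (\<forall>e \<in> set c. x < e \<longrightarrow> e = max0 c)}"

definition descent_value_total :: "nat \<Rightarrow> nat" where
  "descent_value_total n = (\<Sum>c \<in> sorted_inv_seqs n. card (descent_values c))"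

lemma sorted_inv_seqs_0: "sorted_inv_seqs 0 = {[]}"
  by (auto simp: sorted_inv_seqs_def inv_seq_def)

lemma avoiders_0: "avoiders 0 = {[]}"
  by (auto simp: avoiders_def inv_seq_def has_bad_triple_def)

lemma extendable_0: "extendable 0 = {}"
  by (auto simp: extendable_def avoiders_def inv_seq_def)

lemma descent_value_total_0: "descent_value_total 0 = 0"
  by (simp add: descent_value_total_def sorted_inv_seqs_0 descent_values_def max0_def)

lemma I_count_eq_card_avoiders: "I_count n = card (avoiders n)"
  unfolding I_count_def avoiders_def avoids_bad_patterns_iff ..

lemma inv_seq_snoc: "inv_seq (Suc n) (c @ [x]) \<longleftrightarrow> inv_seq n c \<and> x \<le> n"
  by (auto simp: inv_seq_def nth_append less_Suc_eq)

lemma inv_seq_less: "inv_seq n a \<Longrightarrow> e \<in> set a \<Longrightarrow> e < n"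
  by (auto simp: inv_seq_def in_set_conv_nth)

lemma max0_inv_seq_le: "inv_seq n a \<Longrightarrow> max0 a \<le> n"
  by (auto simp: max0_le_iff dest: inv_seq_less)

lemma finite_inv_seqs: "finite {a. inv_seq n a}"
proof (rule finite_subset)
  show "{a. inv_seq n a} \<subseteq> {a. set a \<subseteq> {..n} \<and> length a = n}"
    using inv_seq_less by (fastforce simp: inv_seq_def)
qed (simp add: finite_lists_length_eq)

lemma finite_avoiders: "finite (avoiders n)"
  unfolding avoiders_def using finite_inv_seqs by (rule rev_finite_subset) auto

lemma finite_sorted_inv_seqs: "finite (sorted_inv_seqs n)"
  unfolding sorted_inv_seqs_def using finite_inv_seqs by (rule rev_finite_subset) auto

lemma has_bad_triple_not_sorted:
  assumes "has_bad_triple a"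
  shows "\<not> sorted a"
proof -
  obtain i j k where "i < j" "j < k" "k < length a" "a ! j < a ! i"
    using assms by (auto simp: has_bad_triple_def)
  then have "a ! i \<in> descent_tops a"
    by (intro descent_topsI) auto
  then show ?thesis
    by (auto simp: sorted_iff_descent_tops_empty)
qed

lemma sorted_inv_seqs_subset_avoiders: "sorted_inv_seqs n \<subseteq> avoiders n"
  unfolding sorted_inv_seqs_def avoiders_def using has_bad_triple_not_sorted by blast

lemma not_sorted_if_notin_sorted_inv_seqs: "c \<in> avoiders n \<Longrightarrow> c \<notin> sorted_inv_seqs n \<Longrightarrow> \<not> sorted c"
  by (simp add: avoiders_def sorted_inv_seqs_def)

lemma avoiders_snoc_iff:
  "c @ [x] \<in> avoiders (Suc n) \<longleftrightarrow> c \<in> avoiders n \<and> x \<le> n \<and> descent_tops c \<subseteq> {x}"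
  by (auto simp: avoiders_def inv_seq_snoc has_bad_triple_snoc)

lemma sorted_inv_seqs_snoc_iff:
  "c @ [x] \<in> sorted_inv_seqs (Suc n) \<longleftrightarrow> c \<in> sorted_inv_seqs n \<and> max0 c \<le> x \<and> x \<le> n"
  by (auto simp: sorted_inv_seqs_def inv_seq_snoc sorted_snoc_iff)

lemma sum_snoc_split:
  assumes "finite A" and "finite B" and "\<And>a. a \<in> A \<Longrightarrow> a \<noteq> [] \<and> butlast a \<in> B"
  shows "(\<Sum>a \<in> A. f a) = (\<Sum>c \<in> B. \<Sum>x \<in> {x. c @ [x] \<in> A}. f (c @ [x]))"
proof -
  let ?snoc = "\<lambda>(c, x). c @ [x]"
  let ?S = "SIGMA c:B. {x. c @ [x] \<in> A}"
  have img: "?snoc ` ?S = A"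
  proof
    show "A \<subseteq> ?snoc ` ?S"
    proof
      fix a assume "a \<in> A"
      then obtain c x where "a = c @ [x]"
        using assms(3) rev_exhaust by blast
      with \<open>a \<in> A\<close> assms(3)[of a] show "a \<in> ?snoc ` ?S"
        by (intro image_eqI[of _ _ "(c, x)"]) auto
    qed
  qed auto
  have "inj_on ?snoc ?S"
    by (auto simp: inj_on_def)
  have "(\<Sum>a \<in> A. f a) = sum f (?snoc ` ?S)"
    by (simp only: img)
  also have "\<dots> = (\<Sum>p \<in> ?S. f (?snoc p))"
    by (rule sum.reindex[OF \<open>inj_on ?snoc ?S\<close>, unfolded comp_def])
  also have "\<dots> = (\<Sum>(c, x) \<in> ?S. f (c @ [x]))"
    by (rule sum.cong) auto
  also have "\<dots> = (\<Sum>c \<in> B. \<Sum>x \<in> {x. c @ [x] \<in> A}. f (c @ [x]))"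
  proof (rule sum.Sigma[symmetric])
    show "\<forall>c \<in> B. finite {x. c @ [x] \<in> A}"
    proof
      fix c :: "'a list"
      have "inj (\<lambda>x. c @ [x])"
        by (simp add: inj_on_def)
      then show "finite {x. c @ [x] \<in> A}"
        using finite_vimageI[OF \<open>finite A\<close>] by (simp add: vimage_def)
    qed
  qed (rule \<open>finite B\<close>)
  finally show ?thesis .
qed

lemma card_avoiders_snoc_split:
  assumes "A \<subseteq> avoiders (Suc n)"
  shows "card A = (\<Sum>c \<in> avoiders n. card {x. c @ [x] \<in> A})"
proof -
  have prefix: "a \<noteq> [] \<and> butlast a \<in> avoiders n" if "a \<in> A" for a
  proof -
    have a: "a \<in> avoiders (Suc n)"
      using that assms by blast
    then have "length a = Suc n"
      by (simp add: avoiders_def inv_seq_def)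
    then obtain c x where "a = c @ [x]"
      by (metis length_Suc_conv_rev)
    with a show ?thesis
      by (simp add: avoiders_snoc_iff)
  qed
  have "finite A"
    using assms finite_avoiders by (rule finite_subset)
  then show ?thesis
    unfolding card_eq_sum by (rule sum_snoc_split[OF _ finite_avoiders prefix])
qed

lemma sum_sorted_inv_seqs_Suc:
  "(\<Sum>b \<in> sorted_inv_seqs (Suc n). f b) = (\<Sum>c \<in> sorted_inv_seqs n. \<Sum>z = max0 c..n. f (c @ [z]))"
proof -
  have "a \<noteq> [] \<and> butlast a \<in> sorted_inv_seqs n" if "a \<in> sorted_inv_seqs (Suc n)" for a
  proof -
    have "length a = Suc n"
      using that by (auto simp: sorted_inv_seqs_def inv_seq_def)
    then obtain c x where "a = c @ [x]"
      by (auto simp: length_Suc_conv_rev)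
    then show ?thesis
      using that by (auto simp: sorted_inv_seqs_snoc_iff)
  qed
  then have "(\<Sum>b \<in> sorted_inv_seqs (Suc n). f b) =
      (\<Sum>c \<in> sorted_inv_seqs n. \<Sum>z \<in> {z. c @ [z] \<in> sorted_inv_seqs (Suc n)}. f (c @ [z]))"
    by (intro sum_snoc_split finite_sorted_inv_seqs)
  also have "\<dots> = (\<Sum>c \<in> sorted_inv_seqs n. \<Sum>z = max0 c..n. f (c @ [z]))"
    by (intro sum.cong refl) (auto simp: sorted_inv_seqs_snoc_iff)
  finally show ?thesis .
qed

lemma avoiders_extensions_sorted:
  assumes "c \<in> sorted_inv_seqs n"
  shows "{x. c @ [x] \<in> avoiders (Suc n)} = {..n}"
  using assms sorted_inv_seqs_subset_avoiders
  by (auto simp: avoiders_snoc_iff sorted_inv_seqs_def sorted_iff_descent_tops_empty)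

lemma avoiders_extensions_unsorted:
  assumes "c \<in> avoiders n" and "\<not> sorted c"
  shows "{x. c @ [x] \<in> avoiders (Suc n)} = (if c \<in> extendable n then {max0 c} else {})"
proof -
  have "{x. c @ [x] \<in> avoiders (Suc n)} \<subseteq> {max0 c}"
    using snoc_avoiding_eq_max0 assms(2) by (auto simp: avoiders_def)
  moreover have "c \<in> extendable n \<longleftrightarrow> {x. c @ [x] \<in> avoiders (Suc n)} \<noteq> {}"
    using assms by (auto simp: extendable_def)
  ultimately show ?thesis
    by auto
qed

lemma extendable_extensions_unsorted:
  assumes "c \<in> avoiders n" and "\<not> sorted c"
  shows "{x. c @ [x] \<in> extendable (Suc n)} = {x. c @ [x] \<in> avoiders (Suc n)}"
proof (intro set_eqI iffI)
  fix x assume "x \<in> {x. c @ [x] \<in> avoiders (Suc n)}"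
  then have ext: "c @ [x] \<in> avoiders (Suc n)"
    by simp
  then have "x \<le> n" and "descent_tops c \<subseteq> {x}"
    by (simp_all add: avoiders_snoc_iff)
  moreover have "descent_tops (c @ [x]) = descent_tops c"
    using ext assms(2) by (intro descent_tops_snoc_avoiding) (simp_all add: avoiders_def)
  ultimately have "(c @ [x]) @ [x] \<in> avoiders (Suc (Suc n))"
    unfolding avoiders_snoc_iff[of "c @ [x]"] using ext by simp
  moreover have "\<not> sorted (c @ [x])"
    using assms(2) by (simp add: sorted_snoc_iff)
  ultimately show "x \<in> {x. c @ [x] \<in> extendable (Suc n)}"
    using ext unfolding extendable_def by blast
qed (simp add: extendable_def)

lemma extendable_extensions_sorted:
  assumes "c \<in> sorted_inv_seqs n"
  shows "{x. c @ [x] \<in> extendable (Suc n)} = descent_values c"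
proof (intro set_eqI)
  fix x
  have c: "c \<in> avoiders n" "sorted c" "descent_tops c = {}" "max0 c \<le> n"
    using assms sorted_inv_seqs_subset_avoiders
    by (auto simp: sorted_inv_seqs_def max0_inv_seq_le sorted_iff_descent_tops_empty[symmetric])
  then have tops: "descent_tops (c @ [x]) = {e \<in> set c. x < e}"
    by (simp add: descent_tops_snoc)
  have "c @ [x] \<in> extendable (Suc n) \<longleftrightarrow>
      c @ [x] \<in> avoiders (Suc n) \<and> \<not> sorted (c @ [x]) \<and> (\<exists>y. (c @ [x]) @ [y] \<in> avoiders (Suc (Suc n)))"
    unfolding extendable_def by blast
  also have "\<dots> \<longleftrightarrow> x \<le> n \<and> x < max0 c \<and> (\<exists>y \<le> Suc n. {e \<in> set c. x < e} \<subseteq> {y})"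
    unfolding avoiders_snoc_iff[of "c @ [x]"] tops using c
    by (auto simp: avoiders_snoc_iff sorted_snoc_iff)
  also have "\<dots> \<longleftrightarrow> x \<in> descent_values c"
  proof
    assume x: "x \<le> n \<and> x < max0 c \<and> (\<exists>y \<le> Suc n. {e \<in> set c. x < e} \<subseteq> {y})"
    then have "max0 c \<in> set c"
      by (intro max0_in_set) (auto simp: max0_def)
    with x show "x \<in> descent_values c"
      by (auto simp: descent_values_def)
  qed (use c in \<open>auto simp: descent_values_def intro!: exI[of _ "max0 c"]\<close>)
  finally show "x \<in> {x. c @ [x] \<in> extendable (Suc n)} \<longleftrightarrow> x \<in> descent_values c"
    by simp
qed

lemma sum_unsorted_avoiders_extensions:
  "(\<Sum>c \<in> avoiders n - sorted_inv_seqs n. card {x. c @ [x] \<in> avoiders (Suc n)}) = card (extendable n)"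
proof -
  have "(\<Sum>c \<in> avoiders n - sorted_inv_seqs n. card {x. c @ [x] \<in> avoiders (Suc n)}) =
      (\<Sum>c \<in> avoiders n - sorted_inv_seqs n. if c \<in> extendable n then 1 else 0)"
    by (intro sum.cong refl) (auto simp: not_sorted_if_notin_sorted_inv_seqs avoiders_extensions_unsorted)
  also have "\<dots> = card ((avoiders n - sorted_inv_seqs n) \<inter> extendable n)"
    by (simp add: sum.If_cases finite_avoiders)
  also have "(avoiders n - sorted_inv_seqs n) \<inter> extendable n = extendable n"
    by (auto simp: extendable_def sorted_inv_seqs_def)
  finally show ?thesis .
qed

lemma card_avoiders_Suc:
  "card (avoiders (Suc n)) = Suc n * card (sorted_inv_seqs n) + card (extendable n)"
proof -
  let ?ext = "\<lambda>c. card {x. c @ [x] \<in> avoiders (Suc n)}"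
  have "card (avoiders (Suc n)) = (\<Sum>c \<in> avoiders n. ?ext c)"
    by (rule card_avoiders_snoc_split) simp
  also have "\<dots> = (\<Sum>c \<in> avoiders n - sorted_inv_seqs n. ?ext c) + (\<Sum>c \<in> sorted_inv_seqs n. ?ext c)"
    by (rule sum.subset_diff[OF sorted_inv_seqs_subset_avoiders finite_avoiders])
  also have "(\<Sum>c \<in> sorted_inv_seqs n. ?ext c) = Suc n * card (sorted_inv_seqs n)"
    by (simp add: avoiders_extensions_sorted)
  finally show ?thesis
    by (simp add: sum_unsorted_avoiders_extensions)
qed

lemma card_extendable_Suc:
  "card (extendable (Suc n)) = card (extendable n) + descent_value_total n"
proof -
  let ?ext = "\<lambda>c. card {x. c @ [x] \<in> extendable (Suc n)}"
  have "card (extendable (Suc n)) = (\<Sum>c \<in> avoiders n. ?ext c)"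
    by (rule card_avoiders_snoc_split) (auto simp: extendable_def)
  also have "\<dots> = (\<Sum>c \<in> avoiders n - sorted_inv_seqs n. ?ext c) + (\<Sum>c \<in> sorted_inv_seqs n. ?ext c)"
    by (rule sum.subset_diff[OF sorted_inv_seqs_subset_avoiders finite_avoiders])
  also have "(\<Sum>c \<in> avoiders n - sorted_inv_seqs n. ?ext c) = card (extendable n)"
    unfolding sum_unsorted_avoiders_extensions[symmetric]
    by (intro sum.cong refl) (auto simp: extendable_extensions_unsorted not_sorted_if_notin_sorted_inv_seqs)
  also have "(\<Sum>c \<in> sorted_inv_seqs n. ?ext c) = descent_value_total n"
    unfolding descent_value_total_def by (intro sum.cong refl) (simp add: extendable_extensions_sorted)
  finally show ?thesis .
qed

lemma card_descent_values_snoc: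
  assumes "max0 c \<le> z"
  shows "card (descent_values (c @ [z])) = (if z = max0 c then card (descent_values c) else z - max0 c)"
proof (cases "z = max0 c")
  case True
  then have "descent_values (c @ [z]) = descent_values c"
    by (auto simp: descent_values_def max0_snoc_ge)
  with True show ?thesis
    by simp
next
  case False
  have "descent_values (c @ [z]) = {max0 c..<z}"
  proof (intro set_eqI iffI)
    fix x assume "x \<in> descent_values (c @ [z])"
    then have "x < z" and above: "\<forall>e \<in> set c. x < e \<longrightarrow> e = z"
      using assms by (auto simp: descent_values_def max0_snoc_ge)
    have "\<forall>e \<in> set c. e \<le> x"
    proof
      fix e assume "e \<in> set c"
      with assms False have "e < z"
        using le_max0[of e c] by linarith
      with above \<open>e \<in> set c\<close> show "e \<le> x"
        by (cases "x < e") auto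
    qed
    with \<open>x < z\<close> show "x \<in> {max0 c..<z}"
      by (simp add: max0_le_iff)
  next
    fix x assume "x \<in> {max0 c..<z}"
    then show "x \<in> descent_values (c @ [z])"
      using assms le_max0[of _ c] by (fastforce simp: descent_values_def max0_snoc_ge)
  qed
  with False show ?thesis
    by simp
qed

lemma sum_diff_reflect:
  assumes "l \<le> (n :: nat)"
  shows "(\<Sum>z = l..n. n - z) = (\<Sum>z \<in> {l<..n}. z - l)"
proof -
  have "(\<Sum>z = l..n. n - z) = (\<Sum>z = l..n. z - l)"
    by (subst sum.atLeastAtMost_rev) (intro sum.cong refl, auto)
  also have "\<dots> = (\<Sum>z \<in> insert l {l<..n}. z - l)"
    using assms by (intro sum.cong refl) auto
  also have "\<dots> = (\<Sum>z \<in> {l<..n}. z - l)"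
    by simp
  finally show ?thesis .
qed

lemma card_sorted_inv_seqs_Suc_sum:
  "card (sorted_inv_seqs (Suc n)) = (\<Sum>c \<in> sorted_inv_seqs n. Suc n - max0 c)"
  unfolding card_eq_sum sum_sorted_inv_seqs_Suc by simp

lemma descent_value_total_Suc_sum:
  "descent_value_total (Suc n) =
     descent_value_total n + (\<Sum>c \<in> sorted_inv_seqs n. \<Sum>z \<in> {max0 c<..n}. z - max0 c)"
proof -
  have "descent_value_total (Suc n) =
      (\<Sum>c \<in> sorted_inv_seqs n. \<Sum>z = max0 c..n. card (descent_values (c @ [z])))"
    unfolding descent_value_total_def by (rule sum_sorted_inv_seqs_Suc)
  also have "\<dots> = (\<Sum>c \<in> sorted_inv_seqs n. card (descent_values c) + (\<Sum>z \<in> {max0 c<..n}. z - max0 c))"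
  proof (intro sum.cong refl)
    fix c assume "c \<in> sorted_inv_seqs n"
    then have "{max0 c..n} = insert (max0 c) {max0 c<..n}"
      by (auto simp: sorted_inv_seqs_def dest: max0_inv_seq_le)
    then show "(\<Sum>z = max0 c..n. card (descent_values (c @ [z]))) =
        card (descent_values c) + (\<Sum>z \<in> {max0 c<..n}. z - max0 c)"
      by (simp add: card_descent_values_snoc)
  qed
  finally show ?thesis
    by (simp add: descent_value_total_def sum.distrib)
qed

lemma card_sorted_inv_seqs_Suc_Suc_sum:
  "card (sorted_inv_seqs (Suc (Suc n))) =
     2 * card (sorted_inv_seqs (Suc n)) + (\<Sum>c \<in> sorted_inv_seqs n. \<Sum>z \<in> {max0 c<..n}. z - max0 c)"
proof -
  have "(\<Sum>b \<in> sorted_inv_seqs (Suc n). n - max0 b) =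
      (\<Sum>c \<in> sorted_inv_seqs n. \<Sum>z = max0 c..n. n - max0 (c @ [z]))"
    by (rule sum_sorted_inv_seqs_Suc)
  also have "\<dots> = (\<Sum>c \<in> sorted_inv_seqs n. \<Sum>z = max0 c..n. n - z)"
    by (intro sum.cong refl) (simp add: max0_snoc_ge)
  also have "\<dots> = (\<Sum>c \<in> sorted_inv_seqs n. \<Sum>z \<in> {max0 c<..n}. z - max0 c)"
    by (rule sum.cong[OF refl]) (simp add: sum_diff_reflect sorted_inv_seqs_def max0_inv_seq_le)
  finally have gaps: "(\<Sum>b \<in> sorted_inv_seqs (Suc n). n - max0 b) =
      (\<Sum>c \<in> sorted_inv_seqs n. \<Sum>z \<in> {max0 c<..n}. z - max0 c)" .
  have "max0 b \<le> n" if "b \<in> sorted_inv_seqs (Suc n)" for b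
    using that inv_seq_less by (fastforce simp: sorted_inv_seqs_def max0_le_iff less_Suc_eq_le)
  then have "card (sorted_inv_seqs (Suc (Suc n))) = (\<Sum>b \<in> sorted_inv_seqs (Suc n). 2 + (n - max0 b))"
    unfolding card_sorted_inv_seqs_Suc_sum by (intro sum.cong refl) (simp add: Suc_diff_le le_SucI)
  then show ?thesis
    unfolding sum.distrib gaps by simp
qed

lemma descent_value_total_Suc:
  "descent_value_total (Suc n) + 2 * card (sorted_inv_seqs (Suc n)) =
     descent_value_total n + card (sorted_inv_seqs (Suc (Suc n)))"
  by (simp add: descent_value_total_Suc_sum card_sorted_inv_seqs_Suc_Suc_sum)

section \<open>The Catalan recurrence\<close>

text \<open>A weakly increasing inversion sequence splits at its last fixed point k into a prefix of
  length k and a tail shifted by k; the tail has no fixed points, so k is determined by the join.\<close>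

definition fixpoint_join :: "nat \<Rightarrow> nat list \<Rightarrow> nat list \<Rightarrow> nat list" where
  "fixpoint_join k p c = p @ k # map (\<lambda>x. x + k) c"

lemma length_fixpoint_join: "length (fixpoint_join k p c) = Suc (length p + length c)"
  by (simp add: fixpoint_join_def)

lemma nth_fixpoint_join:
  assumes "length p = k" and "i < Suc (k + length c)"
  shows "fixpoint_join k p c ! i = (if i < k then p ! i else if i = k then k else c ! (i - Suc k) + k)"
  using assms by (auto simp: fixpoint_join_def nth_append nth_Cons')

lemma fixpoint_join_nth_less:
  assumes p: "p \<in> sorted_inv_seqs k" and c: "c \<in> sorted_inv_seqs m" and i: "k < i" "i < Suc (k + m)"
  shows "fixpoint_join k p c ! i < i"
proof -
  have "length p = k" and "length c = m" and "c ! (i - Suc k) \<le> i - Suc k"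
    using p c i by (auto simp: sorted_inv_seqs_def inv_seq_def)
  with i show ?thesis
    by (simp add: nth_fixpoint_join)
qed

lemma fixpoint_join_in_sorted_inv_seqs:
  assumes p: "p \<in> sorted_inv_seqs k" and c: "c \<in> sorted_inv_seqs m"
  shows "fixpoint_join k p c \<in> sorted_inv_seqs (Suc (k + m))"
proof -
  have lp: "length p = k" and lc: "length c = m"
    using p c by (auto simp: sorted_inv_seqs_def inv_seq_def)
  have "fixpoint_join k p c ! i \<le> i" if "i < Suc (k + m)" for i
  proof (cases "k < i")
    case True
    with fixpoint_join_nth_less[OF p c _ that] show ?thesis
      by simp
  next
    case False
    with p that show ?thesis
      by (auto simp: nth_fixpoint_join lp lc sorted_inv_seqs_def inv_seq_def)
  qed
  then have "inv_seq (Suc (k + m)) (fixpoint_join k p c)"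
    by (simp add: inv_seq_def length_fixpoint_join lp lc)
  moreover have "\<forall>x \<in> set p. x < k"
    using p inv_seq_less by (auto simp: sorted_inv_seqs_def)
  then have "sorted (fixpoint_join k p c)"
    using p c by (auto simp: fixpoint_join_def sorted_append sorted_inv_seqs_def sorted_map less_imp_le)
  ultimately show ?thesis
    by (simp add: sorted_inv_seqs_def)
qed

lemma fixpoint_join_inj:
  assumes p: "p \<in> sorted_inv_seqs k" and c: "c \<in> sorted_inv_seqs m"
    and p': "p' \<in> sorted_inv_seqs k'" and c': "c' \<in> sorted_inv_seqs m'"
    and "k + m = k' + m'" and eq: "fixpoint_join k p c = fixpoint_join k' p' c'"
  shows "k = k' \<and> p = p' \<and> c = c'"
proof -
  have lp: "length p = k" and lp': "length p' = k'"
    using p p' by (auto simp: sorted_inv_seqs_def inv_seq_def)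
  have "k = k'"
  proof (rule ccontr)
    assume "k \<noteq> k'"
    then consider "k < k'" | "k' < k"
      by linarith
    then show False
    proof cases
      case 1
      then have "fixpoint_join k p c ! k' < k'"
        using fixpoint_join_nth_less[OF p c] \<open>k + m = k' + m'\<close> by simp
      moreover have "fixpoint_join k' p' c' ! k' = k'"
        by (simp add: fixpoint_join_def nth_append lp')
      ultimately show False
        using eq by simp
    next
      case 2
      then have "fixpoint_join k' p' c' ! k < k"
        using fixpoint_join_nth_less[OF p' c'] \<open>k + m = k' + m'\<close> by simp
      moreover have "fixpoint_join k p c ! k = k"
        by (simp add: fixpoint_join_def nth_append lp)
      ultimately show False
        using eq by simp
    qed
  qed
  with eq lp lp' have "p = p'" and "map (\<lambda>x. x + k) c = map (\<lambda>x. x + k) c'"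
    by (auto simp: fixpoint_join_def)
  moreover have "inj (\<lambda>x. x + k)"
    by (simp add: inj_def)
  ultimately show ?thesis
    using \<open>k = k'\<close> by simp
qed

lemma fixpoint_join_surj:
  assumes b: "b \<in> sorted_inv_seqs (Suc n)"
  obtains k p c where "k \<le> n" "p \<in> sorted_inv_seqs k" "c \<in> sorted_inv_seqs (n - k)"
    "b = fixpoint_join k p c"
proof -
  have lb: "length b = Suc n" and ib: "\<forall>i < Suc n. b ! i \<le> i" and sb: "sorted b"
    using b by (auto simp: sorted_inv_seqs_def inv_seq_def)
  define k where "k = Max {i. i \<le> n \<and> b ! i = i}"
  have fin: "finite {i. i \<le> n \<and> b ! i = i}"
    by (rule finite_subset[of _ "{..n}"]) auto
  have "b ! 0 = 0"
    using ib by auto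
  then have "k \<in> {i. i \<le> n \<and> b ! i = i}"
    unfolding k_def using fin by (intro Max_in) auto
  then have k: "k \<le> n" "b ! k = k"
    by auto
  have below: "b ! i < i" if "k < i" "i \<le> n" for i
  proof -
    have "b ! i \<noteq> i"
    proof
      assume "b ! i = i"
      with that(2) have "i \<le> k"
        unfolding k_def by (intro Max_ge[OF fin]) auto
      with that(1) show False
        by simp
    qed
    moreover have "b ! i \<le> i"
      using that(2) ib by simp
    ultimately show ?thesis
      by simp
  qed
  define p where "p = take k b"
  define c where "c = map (\<lambda>x. x - k) (drop (Suc k) b)"
  have drop_ge: "k \<le> x" if x: "x \<in> set (drop (Suc k) b)" for x
  proof -
    obtain t where "t < length (drop (Suc k) b)" "x = drop (Suc k) b ! t"
      using x unfolding in_set_conv_nth by blast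
    then have "t < n - k" "x = b ! (Suc k + t)"
      using lb k by auto
    moreover have "b ! k \<le> b ! (Suc k + t)"
      using sb lb \<open>t < n - k\<close> by (auto simp: sorted_iff_nth_mono)
    ultimately show ?thesis
      using k by simp
  qed
  then have "map (\<lambda>x. x + k) c = drop (Suc k) b"
    by (simp add: c_def map_idI)
  then have "b = fixpoint_join k p c"
    using id_take_nth_drop[of k b] lb k by (simp add: fixpoint_join_def p_def)
  moreover have "p \<in> sorted_inv_seqs k"
    using lb ib sb k by (auto simp: p_def sorted_inv_seqs_def inv_seq_def)
  moreover have "c \<in> sorted_inv_seqs (n - k)"
  proof -
    have "c ! t \<le> t" if "t < n - k" for t
    proof -
      have "b ! (Suc k + t) < Suc k + t"
        using below[of "Suc k + t"] that by simp
      then show ?thesis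
        using that lb k by (simp add: c_def)
    qed
    moreover have "sorted c"
      using sb drop_ge unfolding c_def sorted_map
      by (auto intro: sorted_wrt_mono_rel[of _ "(\<le>)"] sorted_wrt_drop)
    ultimately show ?thesis
      using lb k by (simp add: sorted_inv_seqs_def inv_seq_def c_def)
  qed
  ultimately show ?thesis
    using that k by blast
qed

lemma bij_betw_fixpoint_join:
  "bij_betw (\<lambda>(k, p, c). fixpoint_join k p c)
     (SIGMA k:{..n}. sorted_inv_seqs k \<times> sorted_inv_seqs (n - k)) (sorted_inv_seqs (Suc n))"
proof (rule bij_betw_imageI)
  show "inj_on (\<lambda>(k, p, c). fixpoint_join k p c) (SIGMA k:{..n}. sorted_inv_seqs k \<times> sorted_inv_seqs (n - k))"
    by (rule inj_onI) (use fixpoint_join_inj in force)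
  show "(\<lambda>(k, p, c). fixpoint_join k p c) ` (SIGMA k:{..n}. sorted_inv_seqs k \<times> sorted_inv_seqs (n - k)) =
      sorted_inv_seqs (Suc n)"
  proof
    show "sorted_inv_seqs (Suc n) \<subseteq> (\<lambda>(k, p, c). fixpoint_join k p c) ` (SIGMA k:{..n}. sorted_inv_seqs k \<times> sorted_inv_seqs (n - k))"
      by (force elim: fixpoint_join_surj)
  qed (use fixpoint_join_in_sorted_inv_seqs in fastforce)
qed

lemma card_sorted_inv_seqs_Suc:
  "card (sorted_inv_seqs (Suc n)) = (\<Sum>k \<le> n. card (sorted_inv_seqs k) * card (sorted_inv_seqs (n - k)))"
proof -
  have "card (sorted_inv_seqs (Suc n)) = card (SIGMA k:{..n}. sorted_inv_seqs k \<times> sorted_inv_seqs (n - k))"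
    using bij_betw_same_card[OF bij_betw_fixpoint_join] by simp
  also have "\<dots> = (\<Sum>k \<le> n. card (sorted_inv_seqs k) * card (sorted_inv_seqs (n - k)))"
    by (simp add: finite_sorted_inv_seqs card_cartesian_product)
  finally show ?thesis .
qed

section \<open>Generating functions\<close>

lemma fps_convolution_square:
  fixes f :: "nat \<Rightarrow> 'a :: comm_ring_1"
  assumes "f 0 = 1" and "\<And>n. f (Suc n) = (\<Sum>k \<le> n. f k * f (n - k))"
  shows "Abs_fps f = 1 + fps_X * Abs_fps f ^ 2"
proof (rule fps_ext)
  fix n
  show "fps_nth (Abs_fps f) n = fps_nth (1 + fps_X * Abs_fps f ^ 2) n"
  proof (cases n)
    case (Suc m)
    have "fps_nth (fps_X * Abs_fps f ^ 2) (Suc m) = fps_nth (Abs_fps f ^ 2) m"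
      by (simp only: fps_X_mult_nth) simp
    also have "\<dots> = (\<Sum>k \<le> m. f k * f (m - k))"
      by (simp add: power2_eq_square fps_mult_nth atLeast0AtMost)
    finally show ?thesis
      by (simp add: Suc assms)
  qed (simp add: assms)
qed

lemma fps_sqrt_catalan:
  fixes S C :: "'a :: field_char_0 fps"
  assumes "fps_nth S 0 = 1" and "S ^ 2 = 1 - 4 * fps_X" and "C = 1 + fps_X * C ^ 2"
  shows "S = 1 - 2 * fps_X * C"
proof -
  let ?T = "1 - 2 * fps_X * C"
  have "(S - ?T) * (S + ?T) = 0"
    using assms(2,3) by algebra
  moreover have "S + ?T \<noteq> 0"
  proof
    assume "S + ?T = 0"
    then have "fps_nth (S + ?T) 0 = 0"
      by simp
    with assms(1) show False
      by simp
  qed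
  ultimately show ?thesis
    by simp
qed

lemma fps_deriv_catalan:
  fixes S C :: "'a :: field_char_0 fps"
  assumes "fps_nth S 0 = 1" and "S ^ 2 = 1 - 4 * fps_X" and "C = 1 + fps_X * C ^ 2"
  shows "fps_deriv (fps_X * C) * S = 1"
proof -
  let ?P = "fps_deriv (fps_X * C)"
  have "S = 1 - (fps_X * C + fps_X * C)"
    using fps_sqrt_catalan[OF assms] by algebra
  then have "fps_deriv S = fps_deriv (1 - (fps_X * C + fps_X * C))"
    by (rule arg_cong)
  also have "\<dots> = - (?P + ?P)"
    by (simp only: fps_deriv_sub fps_deriv_add fps_deriv_1) simp
  finally have deriv_S: "fps_deriv S = - (?P + ?P)" .
  have "fps_deriv (S * S) = fps_deriv (1 - 4 * fps_X :: 'a fps)"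
    using assms(2) by (simp add: power2_eq_square)
  then have "S * fps_deriv S + fps_deriv S * S = - 4"
    by (simp only: fps_deriv_mult) simp
  with deriv_S have "4 * (?P * S) = 4 * 1"
    by algebra
  moreover have "(4 :: 'a fps) \<noteq> 0"
  proof
    assume "(4 :: 'a fps) = 0"
    then have "fps_nth (4 :: 'a fps) 0 = 0"
      by simp
    then show False
      by simp
  qed
  ultimately show ?thesis
    by simp
qed

lemma avoiders_fps_equation:
  fixes S :: "real fps"
  assumes "fps_nth S 0 = 1" and "S ^ 2 = 1 - 4 * fps_X"
  shows "Abs_fps (\<lambda>n. real (card (avoiders n))) * (2 * (1 - fps_X) ^ 2 * (1 - 4 * fps_X)) =
    (1 - 4 * fps_X) * (1 - 2 * fps_X) * (3 - 2 * fps_X)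
      - (1 - 8 * fps_X + 12 * fps_X ^ 2 - 2 * fps_X ^ 3) * S"
proof -
  define A where "A = Abs_fps (\<lambda>n. real (card (avoiders n)))"
  define C where "C = Abs_fps (\<lambda>n. real (card (sorted_inv_seqs n)))"
  define G where "G = Abs_fps (\<lambda>n. real (descent_value_total n))"
  define L where "L = Abs_fps (\<lambda>n. real (card (extendable n)))"
  have C: "C = 1 + fps_X * C ^ 2"
    unfolding C_def by (rule fps_convolution_square) (simp_all add: sorted_inv_seqs_0 card_sorted_inv_seqs_Suc)
  have C1: "card (sorted_inv_seqs (Suc 0)) = 1"
    by (simp add: card_sorted_inv_seqs_Suc sorted_inv_seqs_0)
  have G: "fps_X * G - fps_X * (fps_X * G) = C - 1 + fps_X - fps_X * C - fps_X * C"
  proof (rule fps_ext)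
    fix n
    consider "n = 0" | "n = Suc 0" | k where "n = Suc (Suc k)"
      by (metis nat.exhaust)
    then show "fps_nth (fps_X * G - fps_X * (fps_X * G)) n = fps_nth (C - 1 + fps_X - fps_X * C - fps_X * C) n"
    proof cases
      case 1
      then show ?thesis
        by (simp add: C_def sorted_inv_seqs_0)
    next
      case 2
      then show ?thesis
        using C1 by (simp add: G_def C_def numeral_fps_const sorted_inv_seqs_0 descent_value_total_0)
    next
      case (3 k)
      then show ?thesis
        using descent_value_total_Suc[of k] by (simp add: G_def C_def numeral_fps_const flip: of_nat_add)
    qed
  qed
  have L: "L - fps_X * L = fps_X * G"
  proof (rule fps_ext)
    fix n
    show "fps_nth (L - fps_X * L) n = fps_nth (fps_X * G) n"
      by (cases n) (simp_all add: L_def G_def extendable_0 card_extendable_Suc)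
  qed
  have A: "A = 1 + fps_X * fps_deriv (fps_X * C) + fps_X * L"
  proof (rule fps_ext)
    fix n
    show "fps_nth A n = fps_nth (1 + fps_X * fps_deriv (fps_X * C) + fps_X * L) n"
      by (cases n) (simp_all add: A_def C_def L_def avoiders_0 card_avoiders_Suc algebra_simps)
  qed
  have "S = 1 - 2 * fps_X * C" and "fps_deriv (fps_X * C) * S = 1"
    using fps_sqrt_catalan[OF assms C] fps_deriv_catalan[OF assms C] by simp_all
  then show ?thesis
    using A G L assms(2) unfolding A_def[symmetric] by algebra
qed

lemma I_count_first_values: "map I_count [0..<6] = [1, 1, 2, 6, 21, 76]"
proof -
  have dvt: "descent_value_total (Suc n) =
      descent_value_total n + card (sorted_inv_seqs (Suc (Suc n))) - 2 * card (sorted_inv_seqs (Suc n))" for n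
    using descent_value_total_Suc[of n] by linarith
  show ?thesis
    by (simp add: I_count_eq_card_avoiders card_avoiders_Suc card_extendable_Suc dvt card_sorted_inv_seqs_Suc
        avoiders_0 extendable_0 sorted_inv_seqs_0 descent_value_total_0 upt_rec eval_nat_numeral)
qed

theorem mainTheorem5:
  fixes S :: "real fps"
  assumes "fps_nth S 0 = 1" and "S ^ 2 = 1 - 4 * fps_X"
  shows "Abs_fps (\<lambda>n. real (I_count n)) =
           ((1 - 4 * fps_X) * (1 - 2 * fps_X) * (3 - 2 * fps_X)
             - (1 - 8 * fps_X + 12 * fps_X ^ 2 - 2 * fps_X ^ 3) * S)
           / (2 * (1 - fps_X) ^ 2 * (1 - 4 * fps_X))
       \<and> map I_count [0..<6] = [1, 1, 2, 6, 21, 76]"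
proof
  let ?D = "2 * (1 - fps_X) ^ 2 * (1 - 4 * fps_X) :: real fps"
  have "fps_nth ?D 0 \<noteq> 0"
    by simp
  then have "?D \<noteq> 0"
    by (metis fps_zero_nth)
  moreover have "Abs_fps (\<lambda>n. real (I_count n)) * ?D =
      (1 - 4 * fps_X) * (1 - 2 * fps_X) * (3 - 2 * fps_X)
        - (1 - 8 * fps_X + 12 * fps_X ^ 2 - 2 * fps_X ^ 3) * S"
    using avoiders_fps_equation[OF assms] by (simp add: I_count_eq_card_avoiders)
  ultimately show "Abs_fps (\<lambda>n. real (I_count n)) =
      ((1 - 4 * fps_X) * (1 - 2 * fps_X) * (3 - 2 * fps_X)
        - (1 - 8 * fps_X + 12 * fps_X ^ 2 - 2 * fps_X ^ 3) * S) / ?D"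
    by (metis nonzero_mult_div_cancel_right)
qed (rule I_count_first_values)

end
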